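(* Let $\mathcal{H}$ be a separable infinite dimensional Hilbert space and let $Z_1,Z_2$ be Read isometries on $\mathcal{H}$. Then for any non-zero $p\in\mathbb{N}$, the WOT-closed algebra $\mathfrak{Z}_p$ generated by $\{Z_\mu:\mu\in\mathbb{F}_2^+,\ |\mu|=p\}$ equals $B(\mathcal{H})$.
   Context: $\mathbb{F}_2^+$ is the free semigroup on $\{1,2\}$ (words in $1,2$), $|\mu|$ the length of a word, and $Z_\mu=Z_{i_1}\cdots Z_{i_n}$ for $\mu=i_1\cdots i_n$. Read isometries are isometries $Z_1,Z_2$ on $\mathcal{H}$ with $Z_1Z_1^*+Z_2Z_2^*=I$, constructed by Read (and streamlined by Davidson), with the property that there exist orthonormal bases $\{h_j\}_{j\in\mathbb{N}}$, $\{g_i\}_{i\in\mathbb{N}}$ of $\mathcal{H}$ and operators $S_{i,j,k}\in\operatorname{span}\{Z_w: w\in\mathbb{F}_2^+,\ |w|=2^k\}$ such that for each $i,j$, $S_{i,j,k}\to g_i\otimes h_j^*$ in the WOT as $k\to\infty$, where $g\otimes h^*$ denotes the rank one operator $\xi\mapsto\langle\xi,h\rangle g$. *)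

theory Defs
  imports "HOL-Analysis.Analysis"
begin

text \<open>HOL-Analysis only provides real inner product spaces, so complex vector
spaces and complex Hilbert spaces are introduced here as type classes.
The inner product is linear in the first and conjugate linear in the second
argument, matching the convention of the rank one operator
xi maps to inner xi h times g.\<close>

class complex_vector = real_vector +
  fixes scaleC :: "complex \<Rightarrow> 'a \<Rightarrow> 'a" (infixr \<open>*\<^sub>C\<close> 75)
  assumes scaleC_add_right: "a *\<^sub>C (x + y) = a *\<^sub>C x + a *\<^sub>C y"
    and scaleC_add_left: "(a + b) *\<^sub>C x = a *\<^sub>C x + b *\<^sub>C x"
    and scaleC_scaleC: "a *\<^sub>C (b *\<^sub>C x) = (a * b) *\<^sub>C x"
    and scaleC_one: "1 *\<^sub>C x = x"
    and scaleR_scaleC: "r *\<^sub>R x = complex_of_real r *\<^sub>C x"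

class complex_inner = complex_vector + real_normed_vector +
  fixes cinner :: "'a \<Rightarrow> 'a \<Rightarrow> complex"
  assumes cinner_commute: "cinner x y = cnj (cinner y x)"
    and cinner_add_left: "cinner (x + y) z = cinner x z + cinner y z"
    and cinner_scaleC_left: "cinner (c *\<^sub>C x) y = c * cinner x y"
    and cinner_self_real: "Im (cinner x x) = 0"
    and cinner_self_nonneg: "0 \<le> Re (cinner x x)"
    and cinner_self_eq_zero: "cinner x x = 0 \<longleftrightarrow> x = 0"
    and norm_eq_sqrt_cinner: "norm x = sqrt (Re (cinner x x))"

class chilbert_space = complex_inner + complete_space

definition cspan :: "'a::complex_vector set \<Rightarrow> 'a set" where
  "cspan S = {\<Sum>x\<in>T. c x *\<^sub>C x | T c. finite T \<and> T \<subseteq> S}"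

definition separable_hspace :: "'a::complex_inner itself \<Rightarrow> bool" where
  "separable_hspace _ \<longleftrightarrow> (\<exists>D::'a set. countable D \<and> closure D = UNIV)"

definition infinite_dimensional :: "'a::complex_vector itself \<Rightarrow> bool" where
  "infinite_dimensional _ \<longleftrightarrow> (\<forall>S::'a set. finite S \<longrightarrow> cspan S \<noteq> UNIV)"

definition clinear :: "('a::complex_vector \<Rightarrow> 'b::complex_vector) \<Rightarrow> bool" where
  "clinear f \<longleftrightarrow> (\<forall>x y. f (x + y) = f x + f y) \<and> (\<forall>c x. f (c *\<^sub>C x) = c *\<^sub>C f x)"

definition bounded_clinear :: "('a::complex_inner \<Rightarrow> 'b::complex_inner) \<Rightarrow> bool" where
  "bounded_clinear f \<longleftrightarrow> clinear f \<and> (\<exists>K. \<forall>x. norm (f x) \<le> norm x * K)"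

definition bounded_ops :: "('a::complex_inner \<Rightarrow> 'a) set" where
  "bounded_ops = {T. bounded_clinear T}"

definition cadjoint :: "('a::complex_inner \<Rightarrow> 'a) \<Rightarrow> ('a \<Rightarrow> 'a)" where
  "cadjoint A = (SOME B. \<forall>x y. cinner (A x) y = cinner x (B y))"

definition isometry :: "('a::complex_inner \<Rightarrow> 'a) \<Rightarrow> bool" where
  "isometry Z \<longleftrightarrow> bounded_clinear Z \<and> (\<forall>x. norm (Z x) = norm x)"

definition rank_one :: "'a::complex_inner \<Rightarrow> 'a \<Rightarrow> ('a \<Rightarrow> 'a)" where
  "rank_one g h = (\<lambda>\<xi>. cinner \<xi> h *\<^sub>C g)"

definition orthonormal_basis :: "(nat \<Rightarrow> 'a::complex_inner) \<Rightarrow> bool" where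
  "orthonormal_basis e \<longleftrightarrow>
     (\<forall>i j. cinner (e i) (e j) = (if i = j then 1 else 0)) \<and> closure (cspan (range e)) = UNIV"

definition op_cspan :: "('a::complex_vector \<Rightarrow> 'a) set \<Rightarrow> ('a \<Rightarrow> 'a) set" where
  "op_cspan S = {(\<lambda>x. \<Sum>A\<in>F. c A *\<^sub>C A x) | F c. finite F \<and> F \<subseteq> S}"

definition wot_tendsto :: "(nat \<Rightarrow> ('a::complex_inner \<Rightarrow> 'a)) \<Rightarrow> ('a \<Rightarrow> 'a) \<Rightarrow> bool" where
  "wot_tendsto S T \<longleftrightarrow> (\<forall>x y. (\<lambda>k. cinner (S k x) y) \<longlonglongrightarrow> cinner (T x) y)"

definition words :: "nat list set" where
  "words = {\<mu>. set \<mu> \<subseteq> {1, 2}}"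

definition Zword :: "('a \<Rightarrow> 'a) \<Rightarrow> ('a \<Rightarrow> 'a) \<Rightarrow> nat list \<Rightarrow> ('a \<Rightarrow> 'a)" where
  "Zword Z1 Z2 \<mu> = foldr (\<lambda>i A. (if i = 1 then Z1 else Z2) \<circ> A) \<mu> id"

definition read_isometries :: "('a::complex_inner \<Rightarrow> 'a) \<Rightarrow> ('a \<Rightarrow> 'a) \<Rightarrow> bool" where
  "read_isometries Z1 Z2 \<longleftrightarrow>
     isometry Z1 \<and> isometry Z2 \<and>
     (\<forall>x. Z1 (cadjoint Z1 x) + Z2 (cadjoint Z2 x) = x) \<and>
     (\<exists>(h::nat \<Rightarrow> 'a) (g::nat \<Rightarrow> 'a) (S::nat \<Rightarrow> nat \<Rightarrow> nat \<Rightarrow> ('a \<Rightarrow> 'a)).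
        orthonormal_basis h \<and> orthonormal_basis g \<and>
        (\<forall>i j k. S i j k \<in> op_cspan {Zword Z1 Z2 w | w. w \<in> words \<and> length w = 2 ^ k}) \<and>
        (\<forall>i j. wot_tendsto (\<lambda>k. S i j k) (rank_one (g i) (h j))))"

definition wot_closed :: "('a::complex_inner \<Rightarrow> 'a) set \<Rightarrow> bool" where
  "wot_closed M \<longleftrightarrow> M \<subseteq> bounded_ops \<and>
     (\<forall>T\<in>bounded_ops.
        (\<forall>F \<epsilon>. finite F \<and> \<epsilon> > 0 \<longrightarrow>
           (\<exists>A\<in>M. \<forall>(x, y)\<in>F. cmod (cinner (A x) y - cinner (T x) y) < \<epsilon>))
        \<longrightarrow> T \<in> M)"

definition op_subalgebra :: "('a::complex_inner \<Rightarrow> 'a) set \<Rightarrow> bool" where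
  "op_subalgebra M \<longleftrightarrow> M \<subseteq> bounded_ops \<and> (\<lambda>x. 0) \<in> M \<and>
     (\<forall>A\<in>M. \<forall>B\<in>M. (\<lambda>x. A x + B x) \<in> M) \<and>
     (\<forall>c. \<forall>A\<in>M. (\<lambda>x. c *\<^sub>C A x) \<in> M) \<and>
     (\<forall>A\<in>M. \<forall>B\<in>M. A \<circ> B \<in> M)"

definition wot_algebra_generated :: "('a::complex_inner \<Rightarrow> 'a) set \<Rightarrow> ('a \<Rightarrow> 'a) set" where
  "wot_algebra_generated S = \<Inter> {M. op_subalgebra M \<and> wot_closed M \<and> S \<subseteq> M}"

end

theory Submission
  imports Defs
begin

text \<open>Let \<open>M\<close> be a WOT-closed algebra containing every \<open>Z\<^sub>\<mu>\<close> with \<open>|\<mu>| = p\<close>.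
Each \<open>S\<^sub>i\<^sub>,\<^sub>j\<^sub>,\<^sub>k\<close> is a combination of words of length \<open>2\<^sup>k\<close>, and by pigeonhole
\<open>2\<^sup>k mod p\<close> is constant on an infinite set \<open>K\<close>; so for \<open>k\<^sub>1, \<dots>, k\<^sub>p \<in> K\<close> every word
occurring in a product \<open>S\<^sub>i\<^sub>,\<^sub>j\<^sub>1\<^sub>,\<^sub>k\<^sub>1 \<cdots> S\<^sub>i\<^sub>,\<^sub>j\<^sub>p\<^sub>,\<^sub>k\<^sub>p\<close> has length divisible
by \<open>p\<close>, and the product lies in \<open>M\<close>. Letting \<open>k\<^sub>1, \<dots>, k\<^sub>p\<close> tend to infinity in \<open>K\<close>
one at a time (the factors already replaced by their rank one limits sit on the left, where
they preserve WOT convergence) puts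
\<open>(g\<^sub>i \<otimes> h\<^sub>j\<^sub>0\<^sup>*)\<^sup>p\<^sup>-\<^sup>1 (g\<^sub>i \<otimes> h\<^sub>j\<^sup>*) = \<langle>g\<^sub>i, h\<^sub>j\<^sub>0\<rangle>\<^sup>p\<^sup>-\<^sup>1 g\<^sub>i \<otimes> h\<^sub>j\<^sup>*\<close> into \<open>M\<close>, and \<open>j\<^sub>0\<close>
can be chosen with \<open>\<langle>g\<^sub>i, h\<^sub>j\<^sub>0\<rangle> \<noteq> 0\<close>. Then \<open>M\<close> contains every \<open>u \<otimes> h\<^sub>j\<^sup>*\<close>, hence the
finite rank operators \<open>\<Sum>\<^sub>j\<^sub><\<^sub>N T h\<^sub>j \<otimes> h\<^sub>j\<^sup>*\<close>, whose WOT limit is \<open>T\<close>.\<close>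

section \<open>Complex inner product spaces\<close>

lemma scaleC_zero_left [simp]: "(0::complex) *\<^sub>C (x::'a::complex_vector) = 0"
proof -
  have "(0::complex) *\<^sub>C x = (0 + 0) *\<^sub>C x" by simp
  also have "\<dots> = 0 *\<^sub>C x + 0 *\<^sub>C x" by (rule scaleC_add_left)
  finally show ?thesis by simp
qed

lemma scaleC_zero_right [simp]: "a *\<^sub>C (0::'a::complex_vector) = 0"
proof -
  have "a *\<^sub>C (0::'a) = a *\<^sub>C (0 + 0)" by simp
  also have "\<dots> = a *\<^sub>C 0 + a *\<^sub>C 0" by (rule scaleC_add_right)
  finally show ?thesis by simp
qed

lemma scaleC_minus_one_left: "(-1::complex) *\<^sub>C (x::'a::complex_vector) = - x"
  using scaleR_scaleC[of "-1" x] by simp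

lemma scaleC_diff_left: "(a - b) *\<^sub>C (x::'a::complex_vector) = a *\<^sub>C x - b *\<^sub>C x"
proof -
  have "(a - b) *\<^sub>C x + b *\<^sub>C x = a *\<^sub>C x" by (simp only: scaleC_add_left[symmetric]) simp
  then show ?thesis by (simp add: eq_diff_eq)
qed

lemma scaleC_sum_right: "a *\<^sub>C (\<Sum>i\<in>I. f i) = (\<Sum>i\<in>I. a *\<^sub>C (f i::'a::complex_vector))"
  by (induction I rule: infinite_finite_induct) (simp_all add: scaleC_add_right)

lemma cinner_add_right: "cinner x (y + z) = cinner x y + cinner (x::'a::complex_inner) z"
proof -
  have "cinner x (y + z) = cnj (cinner (y + z) x)" by (rule cinner_commute)
  also have "\<dots> = cnj (cinner y x) + cnj (cinner z x)" by (simp only: cinner_add_left complex_cnj_add)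
  finally show ?thesis by (simp only: cinner_commute[symmetric])
qed

lemma cinner_scaleC_right: "cinner x (c *\<^sub>C y) = cnj c * cinner (x::'a::complex_inner) y"
proof -
  have "cinner x (c *\<^sub>C y) = cnj (cinner (c *\<^sub>C y) x)" by (rule cinner_commute)
  also have "\<dots> = cnj c * cnj (cinner y x)" by (simp only: cinner_scaleC_left complex_cnj_mult)
  finally show ?thesis by (simp only: cinner_commute[symmetric])
qed

lemma cinner_zero_left [simp]: "cinner 0 (y::'a::complex_inner) = 0"
  using cinner_scaleC_left[of 0 "0::'a" y] by simp

lemma cinner_zero_right [simp]: "cinner (x::'a::complex_inner) 0 = 0"
  using cinner_scaleC_right[of x 0 "0::'a"] by simp

lemma cinner_minus_left: "cinner (- x) (y::'a::complex_inner) = - cinner x y"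
  using cinner_scaleC_left[of "-1" x y] by (simp add: scaleC_minus_one_left)

lemma cinner_diff_left: "cinner (x - z) (y::'a::complex_inner) = cinner x y - cinner z y"
  by (simp only: diff_conv_add_uminus cinner_add_left cinner_minus_left)

lemma cinner_minus_right: "cinner x (- (y::'a::complex_inner)) = - cinner x y"
proof -
  have "cinner x (- y) = cnj (cinner (- y) x)" by (rule cinner_commute)
  also have "\<dots> = - cnj (cinner y x)" by (simp only: cinner_minus_left complex_cnj_minus)
  finally show ?thesis by (simp only: cinner_commute[symmetric])
qed

lemma cinner_diff_right: "cinner x ((y::'a::complex_inner) - z) = cinner x y - cinner x z"
  by (simp only: diff_conv_add_uminus cinner_add_right cinner_minus_right)

lemma cinner_sum_left: "cinner (\<Sum>i\<in>I. f i) (y::'a::complex_inner) = (\<Sum>i\<in>I. cinner (f i) y)"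
  by (induction I rule: infinite_finite_induct) (simp_all add: cinner_add_left)

lemma cinner_sum_right: "cinner y (\<Sum>i\<in>I. f i) = (\<Sum>i\<in>I. cinner (y::'a::complex_inner) (f i))"
  by (induction I rule: infinite_finite_induct) (simp_all add: cinner_add_right)

lemma power2_norm_eq_cinner: "(norm (x::'a::complex_inner))\<^sup>2 = Re (cinner x x)"
  using norm_eq_sqrt_cinner[of x] cinner_self_nonneg[of x] by simp

lemma cinner_self_eq_power2_norm: "cinner x x = complex_of_real ((norm (x::'a::complex_inner))\<^sup>2)"
  using cinner_self_real[of x] by (simp add: power2_norm_eq_cinner complex_eq_iff)

lemma norm_scaleC: "norm (c *\<^sub>C (x::'a::complex_inner)) = cmod c * norm x"
proof -
  have "complex_of_real ((norm (c *\<^sub>C x))\<^sup>2) = cinner (c *\<^sub>C x) (c *\<^sub>C x)"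
    by (simp only: cinner_self_eq_power2_norm)
  also have "\<dots> = (c * cnj c) * cinner x x"
    by (simp add: cinner_scaleC_left cinner_scaleC_right mult_ac)
  also have "\<dots> = complex_of_real ((cmod c * norm x)\<^sup>2)"
    by (simp add: complex_norm_square[symmetric] cinner_self_eq_power2_norm power_mult_distrib)
  finally have "(norm (c *\<^sub>C x))\<^sup>2 = (cmod c * norm x)\<^sup>2"
    by (simp only: of_real_eq_iff)
  then show ?thesis by (rule power2_eq_imp_eq) simp_all
qed

lemma cmod_cinner_le: "cmod (cinner x y) \<le> norm x * norm (y::'a::complex_inner)"
proof (cases "y = 0")
  case True then show ?thesis by simp
next
  case False
  define ny where "ny = (norm y)\<^sup>2"
  have ny: "ny > 0" using False ny_def by simp
  define a where "a = cinner x y"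
  define t where "t = a / complex_of_real ny"
  have yy: "cinner y y = complex_of_real ny" by (simp add: ny_def cinner_self_eq_power2_norm)
  have yx: "cinner y x = cnj a" unfolding a_def by (rule cinner_commute)
  \<comment> \<open>Expand \<open>\<parallel>x - t y\<parallel>\<^sup>2 \<ge> 0\<close> for the projection coefficient \<open>t\<close>.\<close>
  have "cinner (x - t *\<^sub>C y) (x - t *\<^sub>C y) =
        cinner x x - cnj t * a - t * cnj a + t * cnj t * complex_of_real ny"
    by (simp add: cinner_diff_left cinner_diff_right cinner_scaleC_left cinner_scaleC_right
        yy yx a_def[symmetric] algebra_simps)
  also have "\<dots> = cinner x x - complex_of_real ((cmod a)\<^sup>2 / ny)"
    using ny by (simp add: t_def field_simps complex_norm_square[symmetric])
  finally have "(norm (x - t *\<^sub>C y))\<^sup>2 = (norm x)\<^sup>2 - (cmod a)\<^sup>2 / ny"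
    by (simp add: power2_norm_eq_cinner)
  then have "(cmod a)\<^sup>2 \<le> (norm x)\<^sup>2 * ny"
    using ny zero_le_power2[of "norm (x - t *\<^sub>C y)"] by (simp add: pos_divide_le_eq)
  then have "(cmod a)\<^sup>2 \<le> (norm x * norm y)\<^sup>2"
    unfolding ny_def by (simp add: power_mult_distrib)
  then show ?thesis unfolding a_def by (rule power2_le_imp_le) simp
qed

lemma power2_norm_add_orthogonal:
  assumes "cinner a b = 0"
  shows "(norm (a + b))\<^sup>2 = (norm a)\<^sup>2 + (norm (b::'a::complex_inner))\<^sup>2"
proof -
  have "cinner b a = 0" using assms cinner_commute[of b a] by simp
  then have "cinner (a + b) (a + b) = cinner a a + cinner b b"
    using assms by (simp add: cinner_add_left cinner_add_right)
  then show ?thesis by (simp add: power2_norm_eq_cinner)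
qed

lemma cinner_tendsto_left:
  assumes "a \<longlonglongrightarrow> a0"
  shows "(\<lambda>n. cinner (a n) y) \<longlonglongrightarrow> cinner a0 (y::'a::complex_inner)"
proof -
  have "(\<lambda>n. norm (a n - a0) * norm y) \<longlonglongrightarrow> 0"
    using assms by (simp add: LIM_zero tendsto_norm_zero tendsto_mult_left_zero)
  then have "(\<lambda>n. cinner (a n) y - cinner a0 y) \<longlonglongrightarrow> 0"
    by (rule Lim_null_comparison[rotated])
      (intro always_eventually allI, simp add: cinner_diff_left[symmetric] cmod_cinner_le)
  then show ?thesis by (simp add: LIM_zero_iff)
qed

section \<open>Bounded operators\<close>

lemma clinear_add: "clinear f \<Longrightarrow> f (x + y) = f x + f y"
  unfolding clinear_def by blast

lemma clinear_scaleC: "clinear f \<Longrightarrow> f (c *\<^sub>C x) = c *\<^sub>C f x"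
  unfolding clinear_def by blast

lemma clinear_zero: "clinear f \<Longrightarrow> f 0 = 0"
  using clinear_scaleC[of f 0 0] by simp

lemma clinear_sum: "clinear f \<Longrightarrow> f (\<Sum>i\<in>I. g i) = (\<Sum>i\<in>I. f (g i))"
  by (induction I rule: infinite_finite_induct) (simp_all add: clinear_zero clinear_add)

lemma clinear_diff: "clinear f \<Longrightarrow> f (x - y) = f x - f y"
  using clinear_add[of f "x - y" y] by (simp add: eq_diff_eq)

lemma bounded_clinear_clinear: "bounded_clinear f \<Longrightarrow> clinear f"
  unfolding bounded_clinear_def by blast

lemma bounded_clinear_nonneg_bound:
  assumes "bounded_clinear (f :: 'a::complex_inner \<Rightarrow> 'b::complex_inner)"
  obtains K where "K \<ge> 0" and "\<And>x. norm (f x) \<le> norm x * K"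
proof -
  from assms obtain K where K: "\<And>x. norm (f x) \<le> norm x * K"
    unfolding bounded_clinear_def by blast
  have "norm (f x) \<le> norm x * max K 0" for x
    using K[of x] mult_left_mono[of K "max K 0" "norm x"] by simp
  then show ?thesis by (rule that[rotated]) simp
qed

lemma bounded_clinear_comp:
  assumes f: "bounded_clinear f" and g: "bounded_clinear g"
  shows "bounded_clinear (f \<circ> g)"
proof -
  obtain Kf where Kf: "Kf \<ge> 0" "\<And>x. norm (f x) \<le> norm x * Kf"
    using bounded_clinear_nonneg_bound[OF f] by blast
  obtain Kg where Kg: "\<And>x. norm (g x) \<le> norm x * Kg"
    using bounded_clinear_nonneg_bound[OF g] by blast
  have "norm (f (g x)) \<le> norm x * (Kg * Kf)" for x
  proof -
    have "norm (f (g x)) \<le> norm (g x) * Kf" by (rule Kf(2))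
    also have "\<dots> \<le> (norm x * Kg) * Kf" using Kg Kf(1) by (rule mult_right_mono)
    finally show ?thesis by (simp add: mult.assoc)
  qed
  moreover have "clinear (f \<circ> g)"
    using bounded_clinear_clinear[OF f] bounded_clinear_clinear[OF g] by (simp add: clinear_def)
  ultimately show ?thesis unfolding bounded_clinear_def by auto
qed

lemma bounded_clinear_id: "bounded_clinear (id :: 'a::complex_inner \<Rightarrow> 'a)"
  unfolding bounded_clinear_def clinear_def by (intro conjI exI[of _ 1]) auto

lemma bounded_clinear_zero: "bounded_clinear (\<lambda>x::'a::complex_inner. 0::'b::complex_inner)"
  unfolding bounded_clinear_def clinear_def by (intro conjI exI[of _ 0]) auto

lemma bounded_clinear_add:
  assumes f: "bounded_clinear f" and g: "bounded_clinear g"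
  shows "bounded_clinear (\<lambda>x. f x + g x)"
proof -
  obtain Kf where Kf: "\<forall>x. norm (f x) \<le> norm x * Kf" using f unfolding bounded_clinear_def by blast
  obtain Kg where Kg: "\<forall>x. norm (g x) \<le> norm x * Kg" using g unfolding bounded_clinear_def by blast
  have "norm (f x + g x) \<le> norm x * (Kf + Kg)" for x
    using norm_triangle_ineq[of "f x" "g x"] Kf Kg by (simp add: distrib_left add_mono order_trans)
  moreover have "clinear (\<lambda>x. f x + g x)"
    using bounded_clinear_clinear[OF f] bounded_clinear_clinear[OF g]
    unfolding clinear_def by (simp add: scaleC_add_right algebra_simps)
  ultimately show ?thesis unfolding bounded_clinear_def by blast
qed

lemma bounded_clinear_scaleC:
  assumes f: "bounded_clinear f"
  shows "bounded_clinear (\<lambda>x. c *\<^sub>C f x)"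
proof -
  obtain K where K: "K \<ge> 0" "\<And>x. norm (f x) \<le> norm x * K"
    using bounded_clinear_nonneg_bound[OF f] by blast
  have "norm (c *\<^sub>C f x) \<le> norm x * (cmod c * K)" for x
    using mult_left_mono[OF K(2)[of x] norm_ge_zero[of c]] by (simp add: norm_scaleC mult_ac)
  moreover have "clinear (\<lambda>x. c *\<^sub>C f x)"
    using bounded_clinear_clinear[OF f]
    unfolding clinear_def by (simp add: scaleC_add_right scaleC_scaleC mult.commute)
  ultimately show ?thesis unfolding bounded_clinear_def by blast
qed

lemma foldr_comp_Cons: "foldr (\<circ>) (A # As) B = A \<circ> foldr (\<circ>) As B"
  by simp

lemma bounded_clinear_foldr_comp:
  "\<forall>X\<in>set Xs. bounded_clinear X \<Longrightarrow> bounded_clinear (foldr (\<circ>) Xs id)"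
  by (induction Xs) (simp_all add: bounded_clinear_id bounded_clinear_comp)

lemma op_cspan_bounded:
  assumes "\<forall>A\<in>S. bounded_clinear A" and "X \<in> op_cspan S"
  shows "bounded_clinear X"
proof -
  obtain F c where X: "X = (\<lambda>x. \<Sum>A\<in>F. c A *\<^sub>C A x)" and F: "finite F" "F \<subseteq> S"
    using assms(2) unfolding op_cspan_def by blast
  have "bounded_clinear (\<lambda>x. \<Sum>A\<in>F. c A *\<^sub>C A x)"
    using F
  proof (induction F rule: finite_induct)
    case (insert B F)
    then have "bounded_clinear (\<lambda>x. c B *\<^sub>C B x)"
      using assms(1) by (blast intro: bounded_clinear_scaleC)
    with insert show ?case by (simp add: bounded_clinear_add)
  qed (simp add: bounded_clinear_zero)
  then show ?thesis unfolding X .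
qed

lemma bounded_clinear_tendsto:
  assumes f: "bounded_clinear f" and "a \<longlonglongrightarrow> a0"
  shows "(\<lambda>n. f (a n)) \<longlonglongrightarrow> f a0"
proof -
  obtain K where K: "\<forall>x. norm (f x) \<le> norm x * K" using f unfolding bounded_clinear_def by blast
  have "(\<lambda>n. norm (a n - a0) * K) \<longlonglongrightarrow> 0"
    using assms(2) by (simp add: LIM_zero tendsto_norm_zero tendsto_mult_left_zero)
  then have "(\<lambda>n. f (a n) - f a0) \<longlonglongrightarrow> 0"
    by (rule Lim_null_comparison[rotated])
      (use K clinear_diff[OF bounded_clinear_clinear[OF f]] in \<open>intro always_eventually, metis\<close>)
  then show ?thesis by (simp add: LIM_zero_iff)
qed

lemma rank_one_bounded: "bounded_clinear (rank_one (u::'a::complex_inner) v)"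
proof -
  have "norm (rank_one u v x) \<le> norm x * (norm v * norm u)" for x
    using mult_right_mono[OF cmod_cinner_le[of x v] norm_ge_zero[of u]]
    by (simp add: rank_one_def norm_scaleC mult.assoc)
  moreover have "clinear (rank_one u v)" unfolding clinear_def rank_one_def
    by (simp add: cinner_add_left scaleC_add_left cinner_scaleC_left scaleC_scaleC)
  ultimately show ?thesis unfolding bounded_clinear_def by blast
qed

lemma foldr_comp_replicate_rank_one:
  "foldr (\<circ>) (replicate n (rank_one u v) @ [rank_one u w]) id
    = (\<lambda>x. cinner u v ^ n *\<^sub>C rank_one u w x)"
  by (induction n) (simp_all add: scaleC_one fun_eq_iff rank_one_def cinner_scaleC_left
      scaleC_scaleC mult_ac)

definition has_cadjoint :: "('a::complex_inner \<Rightarrow> 'a) \<Rightarrow> bool" where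
  "has_cadjoint L \<longleftrightarrow> (\<exists>L'. \<forall>x y. cinner (L x) y = cinner x (L' y))"

lemma has_cadjoint_comp: "has_cadjoint A \<Longrightarrow> has_cadjoint B \<Longrightarrow> has_cadjoint (A \<circ> B)"
  unfolding has_cadjoint_def by (metis comp_apply)

lemma has_cadjoint_id: "has_cadjoint id"
  unfolding has_cadjoint_def by (intro exI[of _ id]) simp

lemma has_cadjoint_rank_one: "has_cadjoint (rank_one u v)"
  unfolding has_cadjoint_def
proof (intro exI allI)
  fix x y
  show "cinner (rank_one u v x) y = cinner x (rank_one v u y)"
    using cinner_commute[of y u] by (simp add: rank_one_def cinner_scaleC_left cinner_scaleC_right)
qed

lemma wot_tendsto_comp:
  assumes "has_cadjoint L" and "wot_tendsto A T"
  shows "wot_tendsto (\<lambda>k. L \<circ> A k \<circ> R) (L \<circ> T \<circ> R)"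
proof -
  obtain L' where L': "\<And>x y. cinner (L x) y = cinner x (L' y)"
    using assms(1) unfolding has_cadjoint_def by blast
  show ?thesis
    using assms(2) unfolding wot_tendsto_def by (simp add: L')
qed

section \<open>Orthonormal bases\<close>

lemma orthonormal_basis_cinner:
  "orthonormal_basis h \<Longrightarrow> cinner (h i) (h j) = (if i = j then 1 else 0)"
  unfolding orthonormal_basis_def by blast

lemma orthonormal_basis_dense: "orthonormal_basis h \<Longrightarrow> x \<in> closure (cspan (range h))"
  unfolding orthonormal_basis_def by blast

lemma orthonormal_basis_nonzero: "orthonormal_basis h \<Longrightarrow> h i \<noteq> 0"
  using orthonormal_basis_cinner[of h i i] by auto

lemma orthonormal_basis_inj: "orthonormal_basis h \<Longrightarrow> inj h"
  by (rule injI) (metis orthonormal_basis_cinner zero_neq_one)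

lemma cinner_partial_sum_basis:
  assumes "orthonormal_basis h" and "i < N"
  shows "cinner (\<Sum>j<N. cinner x (h j) *\<^sub>C h j) (h i) = cinner x (h i)"
proof -
  have "cinner (\<Sum>j<N. cinner x (h j) *\<^sub>C h j) (h i) = (\<Sum>j<N. cinner x (h j) * cinner (h j) (h i))"
    by (simp add: cinner_sum_left cinner_scaleC_left)
  also have "\<dots> = (\<Sum>j<N. if j = i then cinner x (h j) else 0)"
    using assms(1) by (intro sum.cong) (simp_all add: orthonormal_basis_cinner)
  also have "\<dots> = cinner x (h i)" using assms(2) by simp
  finally show ?thesis .
qed

lemma partial_sum_basis_best_approx:
  assumes "orthonormal_basis h"
  shows "norm (x - (\<Sum>j<N. cinner x (h j) *\<^sub>C h j)) \<le> norm (x - (\<Sum>j<N. d j *\<^sub>C h j))"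
proof -
  define P where "P = (\<Sum>j<N. cinner x (h j) *\<^sub>C h j)"
  define z where "z = (\<Sum>j<N. d j *\<^sub>C h j)"
  have "P - z = (\<Sum>j<N. (cinner x (h j) - d j) *\<^sub>C h j)"
    unfolding P_def z_def by (simp add: scaleC_diff_left sum_subtractf)
  then have "cinner (x - P) (P - z) = (\<Sum>j<N. cnj (cinner x (h j) - d j) * cinner (x - P) (h j))"
    by (simp add: cinner_sum_right cinner_scaleC_right)
  also have "\<dots> = 0"
    unfolding P_def using assms by (simp add: cinner_diff_left cinner_partial_sum_basis)
  finally have "(norm (x - z))\<^sup>2 = (norm (x - P))\<^sup>2 + (norm (P - z))\<^sup>2"
    using power2_norm_add_orthogonal[of "x - P" "P - z"] by simp
  then have "(norm (x - P))\<^sup>2 \<le> (norm (x - z))\<^sup>2" by simp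
  then show ?thesis unfolding P_def z_def by (rule power2_le_imp_le) simp
qed

lemma cspan_basis_eq_partial_sums:
  assumes "orthonormal_basis h" and "z \<in> cspan (range h)"
  obtains N0 where "\<And>N. N \<ge> N0 \<Longrightarrow> \<exists>d. z = (\<Sum>j<N. d j *\<^sub>C h j)"
proof -
  obtain T c where z: "z = (\<Sum>v\<in>T. c v *\<^sub>C v)" and T: "finite T" "T \<subseteq> range h"
    using assms(2) unfolding cspan_def by blast
  define J where "J = h -` T"
  have inj: "inj h" using assms(1) by (rule orthonormal_basis_inj)
  have "finite J" unfolding J_def using T(1) inj by (rule finite_vimageI)
  then obtain N0 where N0: "J \<subseteq> {..<N0}" using finite_nat_bounded by blast
  have "h ` J = T" unfolding J_def using T(2) by blast
  then have zJ: "z = (\<Sum>j\<in>J. c (h j) *\<^sub>C h j)"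
    unfolding z using inj by (auto simp: sum.reindex inj_on_subset)
  show ?thesis
  proof (rule that)
    fix N assume "N \<ge> N0"
    then have "z = (\<Sum>j<N. (if j \<in> J then c (h j) else 0) *\<^sub>C h j)"
      unfolding zJ using N0 by (intro sum.mono_neutral_cong_left) auto
    then show "\<exists>d. z = (\<Sum>j<N. d j *\<^sub>C h j)" by (intro exI[where x="\<lambda>j. if j \<in> J then c (h j) else 0"])
  qed
qed

lemma orthonormal_basis_expansion:
  assumes "orthonormal_basis h"
  shows "(\<lambda>N. \<Sum>j<N. cinner x (h j) *\<^sub>C h j) \<longlonglongrightarrow> x"
proof (rule LIMSEQ_I)
  fix r :: real assume "0 < r"
  then obtain z where z: "z \<in> cspan (range h)" "dist z x < r"
    using orthonormal_basis_dense[OF assms] closure_approachable by blast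
  obtain N0 where N0: "\<And>N. N \<ge> N0 \<Longrightarrow> \<exists>d. z = (\<Sum>j<N. d j *\<^sub>C h j)"
    using cspan_basis_eq_partial_sums[OF assms z(1)] by blast
  have "norm ((\<Sum>j<N. cinner x (h j) *\<^sub>C h j) - x) < r" if N: "N \<ge> N0" for N
  proof -
    obtain d where d: "z = (\<Sum>j<N. d j *\<^sub>C h j)" using N0[OF N] by blast
    have "norm ((\<Sum>j<N. cinner x (h j) *\<^sub>C h j) - x) \<le> norm (x - z)"
      unfolding d using partial_sum_basis_best_approx[OF assms] by (simp add: norm_minus_commute)
    also have "\<dots> < r" using z(2) by (simp add: dist_norm norm_minus_commute)
    finally show ?thesis .
  qed
  then show "\<exists>N0. \<forall>N\<ge>N0. norm ((\<Sum>j<N. cinner x (h j) *\<^sub>C h j) - x) < r" by blast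
qed

lemma orthonormal_basis_ex_cinner_nonzero:
  assumes "orthonormal_basis h" and "u \<noteq> 0"
  obtains j where "cinner u (h j) \<noteq> 0"
proof -
  have "\<not> (\<forall>j. cinner u (h j) = 0)"
  proof
    assume "\<forall>j. cinner u (h j) = 0"
    then have "(\<lambda>N. 0) \<longlonglongrightarrow> u" using orthonormal_basis_expansion[OF assms(1), of u] by simp
    then show False using assms(2) by (simp add: LIMSEQ_const_iff)
  qed
  then show ?thesis using that by blast
qed

section \<open>WOT-closed operator algebras\<close>

lemma op_subalgebra_zero: "op_subalgebra M \<Longrightarrow> (\<lambda>x. 0) \<in> M"
  unfolding op_subalgebra_def by blast

lemma op_subalgebra_add: "op_subalgebra M \<Longrightarrow> A \<in> M \<Longrightarrow> B \<in> M \<Longrightarrow> (\<lambda>x. A x + B x) \<in> M"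
  unfolding op_subalgebra_def by blast

lemma op_subalgebra_scaleC: "op_subalgebra M \<Longrightarrow> A \<in> M \<Longrightarrow> (\<lambda>x. c *\<^sub>C A x) \<in> M"
  unfolding op_subalgebra_def by blast

lemma op_subalgebra_comp: "op_subalgebra M \<Longrightarrow> A \<in> M \<Longrightarrow> B \<in> M \<Longrightarrow> A \<circ> B \<in> M"
  unfolding op_subalgebra_def by blast

lemma op_subalgebra_sum:
  assumes "op_subalgebra M" and "finite F" and "\<forall>B\<in>F. f B \<in> M"
  shows "(\<lambda>x. \<Sum>B\<in>F. c B *\<^sub>C f B x) \<in> M"
  using assms(2,3)
proof (induction F rule: finite_induct)
  case (insert B F)
  then show ?case
    using op_subalgebra_add[OF assms(1) op_subalgebra_scaleC[OF assms(1)]] by simp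
qed (simp add: op_subalgebra_zero[OF assms(1)])

lemma op_subalgebra_comp_op_cspan:
  assumes "op_subalgebra M" and "clinear L" and "X \<in> op_cspan S" and "\<forall>B\<in>S. L \<circ> B \<circ> R \<in> M"
  shows "L \<circ> X \<circ> R \<in> M"
proof -
  obtain F c where X: "X = (\<lambda>x. \<Sum>B\<in>F. c B *\<^sub>C B x)" and F: "finite F" "F \<subseteq> S"
    using assms(3) unfolding op_cspan_def by blast
  have "L \<circ> X \<circ> R = (\<lambda>x. \<Sum>B\<in>F. c B *\<^sub>C (L \<circ> B \<circ> R) x)"
    by (simp add: X fun_eq_iff clinear_sum[OF assms(2)] clinear_scaleC[OF assms(2)])
  also have "\<dots> \<in> M"
    using F assms(4) by (intro op_subalgebra_sum[OF assms(1)]) blast+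
  finally show ?thesis .
qed

lemma bounded_ops_op_subalgebra: "op_subalgebra (bounded_ops :: ('a::complex_inner \<Rightarrow> 'a) set)"
  unfolding op_subalgebra_def bounded_ops_def
  by (auto intro: bounded_clinear_zero bounded_clinear_add bounded_clinear_scaleC bounded_clinear_comp)

lemma bounded_ops_wot_closed: "wot_closed (bounded_ops :: ('a::complex_inner \<Rightarrow> 'a) set)"
  unfolding wot_closed_def by blast

lemma wot_algebra_generated_eq_bounded_ops:
  assumes "G \<subseteq> bounded_ops"
    and "\<And>M. op_subalgebra M \<Longrightarrow> wot_closed M \<Longrightarrow> G \<subseteq> M \<Longrightarrow> bounded_ops \<subseteq> M"
  shows "wot_algebra_generated G = bounded_ops"
  unfolding wot_algebra_generated_def
  using assms bounded_ops_op_subalgebra bounded_ops_wot_closed by (intro antisym Inter_greatest) auto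

lemma wot_closed_limit:
  assumes "wot_closed M" and "T \<in> bounded_ops" and "infinite K" and "\<forall>k\<in>K. A k \<in> M"
    and "wot_tendsto A T"
  shows "T \<in> M"
proof -
  have "\<exists>B\<in>M. \<forall>(x, y)\<in>F. cmod (cinner (B x) y - cinner (T x) y) < \<epsilon>"
    if F: "finite F" and \<epsilon>: "\<epsilon> > 0" for F \<epsilon>
  proof -
    have "\<forall>q\<in>F. eventually (\<lambda>k. cmod (cinner (A k (fst q)) (snd q) - cinner (T (fst q)) (snd q)) < \<epsilon>)
        sequentially"
      using assms(5) \<epsilon> by (auto simp: wot_tendsto_def tendsto_iff dist_norm)
    then have "eventually (\<lambda>k. \<forall>q\<in>F. cmod (cinner (A k (fst q)) (snd q) - cinner (T (fst q)) (snd q)) < \<epsilon>)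
        sequentially"
      using F by (simp add: eventually_ball_finite)
    moreover have "frequently (\<lambda>k. k \<in> K) sequentially"
      using assms(3) by (simp add: cofinite_eq_sequentially[symmetric] frequently_cofinite)
    ultimately obtain k where "k \<in> K"
      and "\<forall>q\<in>F. cmod (cinner (A k (fst q)) (snd q) - cinner (T (fst q)) (snd q)) < \<epsilon>"
      using frequently_eventually_conj frequently_ex by blast
    then show ?thesis using assms(4) by (intro bexI[of _ "A k"]) (auto simp: case_prod_beta)
  qed
  then show ?thesis using assms(1,2) unfolding wot_closed_def by blast
qed

lemma wot_closed_comp_limit:
  assumes "wot_closed M" and "infinite K" and "\<forall>k\<in>K. L \<circ> A k \<circ> R \<in> M"
    and "wot_tendsto A T" and "bounded_clinear L" and "has_cadjoint L"
    and "bounded_clinear T" and "bounded_clinear R"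
  shows "L \<circ> T \<circ> R \<in> M"
proof (rule wot_closed_limit[OF assms(1) _ assms(2,3)])
  show "L \<circ> T \<circ> R \<in> bounded_ops"
    using assms(5,7,8) by (simp add: bounded_ops_def bounded_clinear_comp)
  show "wot_tendsto (\<lambda>k. L \<circ> A k \<circ> R) (L \<circ> T \<circ> R)"
    using assms(6,4) by (rule wot_tendsto_comp)
qed

text \<open>The factors converge one at a time, from left to right. The limits already reached
stay on the left, where they need adjoints to preserve WOT convergence.\<close>

lemma wot_closed_foldr_comp_limit:
  fixes As :: "(nat \<Rightarrow> 'a::complex_inner \<Rightarrow> 'a) list"
  assumes "wot_closed M" and "infinite K" and "list_all2 wot_tendsto As Ts"
    and "\<forall>A\<in>set As. \<forall>k. bounded_clinear (A k)"
    and "\<forall>T\<in>set Ts. bounded_clinear T \<and> has_cadjoint T"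
    and "bounded_clinear L" and "has_cadjoint L"
    and "\<And>ks. length ks = length As \<Longrightarrow> set ks \<subseteq> K \<Longrightarrow>
      L \<circ> foldr (\<circ>) (map2 (\<lambda>A k. A k) As ks) id \<in> M"
  shows "L \<circ> foldr (\<circ>) Ts id \<in> M"
  using assms(3-)
proof (induction As Ts arbitrary: L rule: list_all2_induct)
  case Nil
  then show ?case by fastforce
next
  case (Cons A As T Ts)
  have "L \<circ> T \<circ> foldr (\<circ>) (map2 (\<lambda>A k. A k) As ks) id \<in> M"
    if ks: "length ks = length As" "set ks \<subseteq> K" for ks
  proof (rule wot_closed_comp_limit[OF assms(1,2) _ Cons.hyps(1)])
    have "\<forall>X\<in>set (map2 (\<lambda>A k. A k) As ks). bounded_clinear X"
      using Cons.prems(1) by (auto dest!: set_zip_leftD)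
    then show "bounded_clinear (foldr (\<circ>) (map2 (\<lambda>A k. A k) As ks) id)"
      by (rule bounded_clinear_foldr_comp)
    show "\<forall>k\<in>K. L \<circ> A k \<circ> foldr (\<circ>) (map2 (\<lambda>A k. A k) As ks) id \<in> M"
    proof
      fix k assume "k \<in> K"
      then have "L \<circ> foldr (\<circ>) (map2 (\<lambda>A k. A k) (A # As) (k # ks)) id \<in> M"
        using ks by (intro Cons.prems(5)) auto
      then show "L \<circ> A k \<circ> foldr (\<circ>) (map2 (\<lambda>A k. A k) As ks) id \<in> M"
        by (simp only: list.map zip_Cons_Cons prod.case foldr_comp_Cons comp_assoc)
    qed
  qed (use Cons.prems in simp_all)
  then have "(L \<circ> T) \<circ> foldr (\<circ>) Ts id \<in> M"
  proof (rule Cons.IH[rotated -1])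
    show "\<forall>A\<in>set As. \<forall>k. bounded_clinear (A k)" using Cons.prems(1) by simp
    show "\<forall>T\<in>set Ts. bounded_clinear T \<and> has_cadjoint T" using Cons.prems(2) by simp
    show "bounded_clinear (L \<circ> T)"
      using Cons.prems(2,3) by (intro bounded_clinear_comp) auto
    show "has_cadjoint (L \<circ> T)"
      using Cons.prems(2,4) by (intro has_cadjoint_comp) auto
  qed
  then show ?case by (simp only: foldr_comp_Cons comp_assoc)
qed

lemma rank_one_mem_wot_closed:
  assumes "op_subalgebra M" and "wot_closed M" and "orthonormal_basis g"
    and "\<forall>i. rank_one (g i) v \<in> M"
  shows "rank_one u v \<in> M"
proof -
  obtain U where U: "\<And>n. U n \<in> cspan (range g)" and "U \<longlonglongrightarrow> u"
    using orthonormal_basis_dense[OF assms(3)] by (auto simp: closure_sequential)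
  have "rank_one (U n) v \<in> M" for n
  proof -
    obtain T c where T: "U n = (\<Sum>w\<in>T. c w *\<^sub>C w)" "finite T" "T \<subseteq> range g"
      using U unfolding cspan_def by blast
    have "rank_one (U n) v = (\<lambda>x. \<Sum>w\<in>T. c w *\<^sub>C rank_one w v x)"
      by (simp add: T(1) fun_eq_iff rank_one_def scaleC_sum_right scaleC_scaleC mult.commute)
    also have "\<dots> \<in> M"
      using T(2,3) assms(4) by (intro op_subalgebra_sum[OF assms(1)]) auto
    finally show ?thesis .
  qed
  moreover have "wot_tendsto (\<lambda>n. rank_one (U n) v) (rank_one u v)"
    unfolding wot_tendsto_def rank_one_def cinner_scaleC_left
    using \<open>U \<longlonglongrightarrow> u\<close> by (intro allI tendsto_mult_left cinner_tendsto_left)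
  ultimately show ?thesis
    by (intro wot_closed_limit[OF assms(2) _ infinite_UNIV_nat])
      (simp_all add: bounded_ops_def rank_one_bounded)
qed

lemma bounded_ops_subset_wot_closed:
  assumes "op_subalgebra M" and "wot_closed M" and "orthonormal_basis h"
    and "\<forall>u j. rank_one u (h j) \<in> M"
  shows "bounded_ops \<subseteq> M"
proof
  fix T :: "'a \<Rightarrow> 'a" assume T: "T \<in> bounded_ops"
  then have bT: "bounded_clinear T" by (simp add: bounded_ops_def)
  define A where "A N = (\<lambda>x. \<Sum>j\<in>{..<N}. 1 *\<^sub>C rank_one (T (h j)) (h j) x)" for N
  show "T \<in> M"
  proof (rule wot_closed_limit[OF assms(2) T infinite_UNIV_nat])
    show "\<forall>N\<in>UNIV. A N \<in> M"
      unfolding A_def using assms(4) by (intro ballI op_subalgebra_sum[OF assms(1)]) auto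
    have "A N x = T (\<Sum>j<N. cinner x (h j) *\<^sub>C h j)" for N x
      using bounded_clinear_clinear[OF bT]
      by (simp add: A_def clinear_sum clinear_scaleC rank_one_def scaleC_one)
    then show "wot_tendsto A T"
      unfolding wot_tendsto_def
      using cinner_tendsto_left[OF bounded_clinear_tendsto[OF bT orthonormal_basis_expansion[OF assms(3)]]]
      by simp
  qed
qed

section \<open>Words in the isometries\<close>

definition Zwords :: "('a \<Rightarrow> 'a) \<Rightarrow> ('a \<Rightarrow> 'a) \<Rightarrow> nat \<Rightarrow> ('a \<Rightarrow> 'a) set" where
  "Zwords Z1 Z2 n = {Zword Z1 Z2 \<mu> | \<mu>. \<mu> \<in> words \<and> length \<mu> = n}"

lemma Zword_Nil [simp]: "Zword Z1 Z2 [] = id"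
  by (simp add: Zword_def)

lemma Zword_Cons: "Zword Z1 Z2 (i # \<mu>) = (if i = 1 then Z1 else Z2) \<circ> Zword Z1 Z2 \<mu>"
  by (simp add: Zword_def)

lemma Zword_append: "Zword Z1 Z2 (\<mu> @ \<nu>) = Zword Z1 Z2 \<mu> \<circ> Zword Z1 Z2 \<nu>"
  by (induction \<mu>) (simp_all add: Zword_Cons comp_assoc)

lemma Zword_bounded:
  assumes "bounded_clinear Z1" and "bounded_clinear Z2"
  shows "bounded_clinear (Zword Z1 Z2 \<mu>)"
proof (induction \<mu>)
  case (Cons i \<mu>)
  have "bounded_clinear (if i = 1 then Z1 else Z2)" using assms by simp
  then show ?case unfolding Zword_Cons using Cons.IH by (rule bounded_clinear_comp)
qed (simp only: Zword_Nil bounded_clinear_id)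

lemma Zword_clinear:
  assumes "clinear Z1" and "clinear Z2"
  shows "clinear (Zword Z1 Z2 \<mu>)"
proof (induction \<mu>)
  case (Cons i \<mu>)
  have "clinear (if i = 1 then Z1 else Z2)" using assms by simp
  then show ?case unfolding Zword_Cons using Cons.IH by (simp add: clinear_def)
qed (simp add: clinear_def)

lemma Zword_mem_op_subalgebra:
  assumes "op_subalgebra M" and "Zwords Z1 Z2 p \<subseteq> M"
    and "\<mu> \<in> words" and "p dvd length \<mu>" and "0 < length \<mu>"
  shows "Zword Z1 Z2 \<mu> \<in> M"
proof -
  obtain n where "length \<mu> = Suc n * p"
  proof -
    obtain m where "length \<mu> = p * m" using assms(4) by (rule dvdE)
    with assms(5) show ?thesis by (intro that[of "m - 1"]) (cases m, simp_all)
  qed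
  then show ?thesis
    using assms(3)
  proof (induction n arbitrary: \<mu>)
    case 0
    then show ?case using assms(2) by (auto simp: Zwords_def)
  next
    case (Suc n)
    have words: "take p \<mu> \<in> words" "drop p \<mu> \<in> words"
      using Suc.prems(2) set_take_subset[of p \<mu>] set_drop_subset[of p \<mu>] by (auto simp: words_def)
    have "Zword Z1 Z2 (take p \<mu>) \<in> Zwords Z1 Z2 p"
      using words(1) Suc.prems(1) unfolding Zwords_def by auto
    moreover have "Zword Z1 Z2 (drop p \<mu>) \<in> M"
      using words(2) Suc.prems(1) by (intro Suc.IH) simp_all
    ultimately have "Zword Z1 Z2 (take p \<mu> @ drop p \<mu>) \<in> M"
      unfolding Zword_append using assms(2) by (blast intro: op_subalgebra_comp[OF assms(1)])
    then show ?case by simp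
  qed
qed

lemma Zword_comp_foldr_op_cspan_mem:
  assumes "op_subalgebra M" and "Zwords Z1 Z2 p \<subseteq> M"
    and "clinear Z1" and "clinear Z2"
    and "list_all2 (\<lambda>X n. X \<in> op_cspan (Zwords Z1 Z2 n)) Xs ns"
    and "\<mu> \<in> words" and "p dvd length \<mu> + sum_list ns" and "0 < length \<mu> + sum_list ns"
  shows "Zword Z1 Z2 \<mu> \<circ> foldr (\<circ>) Xs id \<in> M"
  using assms(5-)
proof (induction Xs ns arbitrary: \<mu> rule: list_all2_induct)
  case Nil
  then show ?case using Zword_mem_op_subalgebra[OF assms(1,2)] by simp
next
  case (Cons X Xs n ns)
  have lin: "clinear (Zword Z1 Z2 \<mu>)" using assms(3,4) by (rule Zword_clinear)
  have "Zword Z1 Z2 \<mu> \<circ> X \<circ> foldr (\<circ>) Xs id \<in> M"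
  proof (rule op_subalgebra_comp_op_cspan[OF assms(1) lin Cons.hyps(1)], intro ballI)
    fix B assume "B \<in> Zwords Z1 Z2 n"
    then obtain \<nu> where B: "B = Zword Z1 Z2 \<nu>" and \<nu>: "\<nu> \<in> words" "length \<nu> = n"
      by (auto simp: Zwords_def)
    have "\<mu> @ \<nu> \<in> words" using Cons.prems(1) \<nu>(1) by (simp add: words_def)
    moreover have "length (\<mu> @ \<nu>) + sum_list ns = length \<mu> + sum_list (n # ns)"
      using \<nu>(2) by simp
    ultimately have "Zword Z1 Z2 (\<mu> @ \<nu>) \<circ> foldr (\<circ>) Xs id \<in> M"
      using Cons.prems(2,3) by (intro Cons.IH) (simp_all add: add.assoc)
    then show "Zword Z1 Z2 \<mu> \<circ> B \<circ> foldr (\<circ>) Xs id \<in> M"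
      by (simp add: B Zword_append)
  qed
  then show ?case by (simp only: foldr_comp_Cons comp_assoc)
qed

section \<open>Read isometries\<close>

lemma sum_list_map_mod_const:
  assumes "\<forall>x\<in>set xs. f x mod p = (r::nat)"
  shows "sum_list (map f xs) mod p = length xs * r mod p"
  using assms
proof (induction xs)
  case (Cons x xs)
  have "sum_list (map f (x # xs)) mod p = (f x mod p + sum_list (map f xs) mod p) mod p"
    by (simp add: mod_add_eq)
  also have "\<dots> = (r + length xs * r) mod p"
    using Cons by (simp add: mod_add_right_eq)
  finally show ?case by simp
qed simp

lemma infinite_fiber_mod:
  fixes f :: "nat \<Rightarrow> nat"
  assumes "p \<noteq> 0"
  obtains r where "infinite {k. f k mod p = r}"
proof -
  have "finite (range (\<lambda>k. f k mod p))"
    by (rule finite_subset[of _ "{..<p}"]) (use assms in auto)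
  then show ?thesis
    using pigeonhole_infinite[OF infinite_UNIV_nat] that by auto
qed

lemma foldr_comp_pow2_op_cspan_mem:
  assumes "op_subalgebra M" and "Zwords Z1 Z2 p \<subseteq> M" and "clinear Z1" and "clinear Z2"
    and "p \<noteq> 0" and "\<forall>A\<in>set As. \<forall>k. A k \<in> op_cspan (Zwords Z1 Z2 (2 ^ k))"
    and "length As = p" and "length ks = p" and "\<forall>k\<in>set ks. 2 ^ k mod p = r"
  shows "foldr (\<circ>) (map2 (\<lambda>A k. A k) As ks) id \<in> M"
proof -
  have "sum_list (map (\<lambda>k. 2 ^ k) ks) mod p = length ks * r mod p"
    using assms(9) by (rule sum_list_map_mod_const)
  then have "p dvd length ([] :: nat list) + sum_list (map (\<lambda>k. 2 ^ k) ks)"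
    using assms(8) by (simp add: mod_eq_0_iff_dvd)
  moreover have "0 < length ([] :: nat list) + sum_list (map (\<lambda>k. 2 ^ k :: nat) ks)"
    using assms(5,8) by (cases ks) simp_all
  moreover have "list_all2 (\<lambda>X n. X \<in> op_cspan (Zwords Z1 Z2 n))
      (map2 (\<lambda>A k. A k) As ks) (map (\<lambda>k. 2 ^ k) ks)"
    using assms(6-8) by (simp add: list_all2_conv_all_nth)
  ultimately have "Zword Z1 Z2 [] \<circ> foldr (\<circ>) (map2 (\<lambda>A k. A k) As ks) id \<in> M"
    using assms(1-4)
    by (intro Zword_comp_foldr_op_cspan_mem[where ns="map (\<lambda>k. 2 ^ k) ks"]) (simp_all add: words_def)
  then show ?thesis by simp
qed

lemma read_rank_one_mem:
  fixes Z1 Z2 :: "'a::complex_inner \<Rightarrow> 'a" and g h :: "nat \<Rightarrow> 'a"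
  assumes M: "op_subalgebra M" "wot_closed M" "Zwords Z1 Z2 p \<subseteq> M" and "p \<noteq> 0"
    and Z: "bounded_clinear Z1" "bounded_clinear Z2"
    and "orthonormal_basis g" and "orthonormal_basis h"
    and S_span: "\<forall>i j k. S i j k \<in> op_cspan (Zwords Z1 Z2 (2 ^ k))"
    and S_lim: "\<forall>i j. wot_tendsto (S i j) (rank_one (g i) (h j))"
  shows "rank_one (g i) (h j) \<in> M"
proof -
  obtain j0 where c: "cinner (g i) (h j0) \<noteq> 0"
    using orthonormal_basis_ex_cinner_nonzero[OF assms(8) orthonormal_basis_nonzero[OF assms(7)]] .
  define c where "c = cinner (g i) (h j0)"
  obtain r where K: "infinite {k. 2 ^ k mod p = r}"
    using infinite_fiber_mod[OF assms(4)] .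
  define K where "K = {k. 2 ^ k mod p = r}"
  \<comment> \<open>\<open>S\<^sub>i\<^sub>,\<^sub>j\<^sub>0\<^sub>,\<^sub>k\<^sub>1 \<cdots> S\<^sub>i\<^sub>,\<^sub>j\<^sub>0\<^sub>,\<^sub>k\<^sub>p\<^sub>-\<^sub>1 S\<^sub>i\<^sub>,\<^sub>j\<^sub>,\<^sub>k\<^sub>p\<close> tends to
    \<open>(g\<^sub>i \<otimes> h\<^sub>j\<^sub>0\<^sup>*)\<^sup>p\<^sup>-\<^sup>1 (g\<^sub>i \<otimes> h\<^sub>j\<^sup>*) = c\<^sup>p\<^sup>-\<^sup>1 g\<^sub>i \<otimes> h\<^sub>j\<^sup>*\<close>.\<close>
  define js where "js = replicate (p - 1) j0 @ [j]"
  have len: "length js = p" using assms(4) by (simp add: js_def)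
  have S_bounded: "bounded_clinear (S i' j' k)" for i' j' k
  proof (rule op_cspan_bounded)
    show "\<forall>A\<in>Zwords Z1 Z2 (2 ^ k). bounded_clinear A"
      using Zword_bounded[OF Z] by (auto simp: Zwords_def)
  qed (use S_span in blast)
  have products: "id \<circ> foldr (\<circ>) (map2 (\<lambda>A k. A k) (map (S i) js) ks) id \<in> M"
    if "length ks = length (map (S i) js)" and "set ks \<subseteq> K" for ks
  proof -
    have "foldr (\<circ>) (map2 (\<lambda>A k. A k) (map (S i) js) ks) id \<in> M"
      using that S_span len unfolding K_def
      by (intro foldr_comp_pow2_op_cspan_mem[OF M(1,3) bounded_clinear_clinear[OF Z(1)]
          bounded_clinear_clinear[OF Z(2)] assms(4), where r=r]) auto
    then show ?thesis by simp
  qed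
  have "id \<circ> foldr (\<circ>) (map (\<lambda>j'. rank_one (g i) (h j')) js) id \<in> M"
  proof (rule wot_closed_foldr_comp_limit[OF M(2) K[folded K_def] _ _ _ _ _ products])
    show "list_all2 wot_tendsto (map (S i) js) (map (\<lambda>j'. rank_one (g i) (h j')) js)"
      using S_lim by (simp add: list_all2_map1 list_all2_map2 list_all2_refl)
  qed (simp_all add: S_bounded rank_one_bounded has_cadjoint_rank_one bounded_clinear_id has_cadjoint_id)
  also have "id \<circ> foldr (\<circ>) (map (\<lambda>j'. rank_one (g i) (h j')) js) id
      = (\<lambda>x. c ^ (p - 1) *\<^sub>C rank_one (g i) (h j) x)"
    unfolding js_def c_def map_append map_replicate list.map
    by (simp only: id_comp foldr_comp_replicate_rank_one)
  finally have "(\<lambda>x. (1 / c ^ (p - 1)) *\<^sub>C (c ^ (p - 1) *\<^sub>C rank_one (g i) (h j) x)) \<in> M"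
    by (rule op_subalgebra_scaleC[OF M(1)])
  then show ?thesis using c by (simp add: c_def scaleC_scaleC scaleC_one)
qed

theorem proposition3p1:
  fixes Z1 Z2 :: "'a::chilbert_space \<Rightarrow> 'a"
    and p :: nat
  assumes "separable_hspace TYPE('a)"
    and "infinite_dimensional TYPE('a)"
    and "read_isometries Z1 Z2"
    and "p \<noteq> 0"
  shows "wot_algebra_generated {Zword Z1 Z2 \<mu> | \<mu>. \<mu> \<in> words \<and> length \<mu> = p} = bounded_ops"
proof -
  \<comment> \<open>The bases supplied by the definition of Read isometries make separability and infinite
    dimension (assumptions 1 and 2) redundant.\<close>
  obtain h g :: "nat \<Rightarrow> 'a" and S where Z: "isometry Z1" "isometry Z2"
    and bases: "orthonormal_basis h" "orthonormal_basis g"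
    and S: "\<forall>i j k. S i j k \<in> op_cspan (Zwords Z1 Z2 (2 ^ k))"
      "\<forall>i j. wot_tendsto (S i j) (rank_one (g i) (h j))"
    using assms(3) unfolding read_isometries_def Zwords_def by blast
  have Z_bounded: "bounded_clinear Z1" "bounded_clinear Z2"
    using Z by (simp_all add: isometry_def)
  have "wot_algebra_generated (Zwords Z1 Z2 p) = bounded_ops"
  proof (rule wot_algebra_generated_eq_bounded_ops)
    show "Zwords Z1 Z2 p \<subseteq> bounded_ops"
      using Zword_bounded[OF Z_bounded] by (auto simp: Zwords_def bounded_ops_def)
    fix M assume M: "op_subalgebra M" "wot_closed M" "Zwords Z1 Z2 p \<subseteq> M"
    have "\<forall>i j. rank_one (g i) (h j) \<in> M"
      using read_rank_one_mem[OF M assms(4) Z_bounded bases(2,1) S] by blast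
    then have "\<forall>u j. rank_one u (h j) \<in> M"
      using rank_one_mem_wot_closed[OF M(1,2) bases(2)] by blast
    then show "bounded_ops \<subseteq> M"
      by (rule bounded_ops_subset_wot_closed[OF M(1,2) bases(1)])
  qed
  then show ?thesis by (simp add: Zwords_def)
qed

end
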